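(* For all $\boldsymbol{\omega}\in\mathbb{R}^N$, $$\left|\prod_{m=1}^M\frac{1}{1-z_m(\boldsymbol{\omega})}-\prod_{m=1}^M e^{z_m(\boldsymbol{\omega})}\right|\le\sum_{m=1}^M\min\Big\{2,\ \big|1-z_m(\boldsymbol{\omega})-e^{-z_m(\boldsymbol{\omega})}\big|\Big\}.$$
   Context: Let $\sigma_v^2>0$, $\beta(M)>0$, $\mathbf{h}\in\mathbb{C}^N$, and $\lambda_1,\dots,\lambda_M\ge0$ the eigenvalues of a Hermitian positive semidefinite $\boldsymbol{\Sigma}_{\mathbf{s}}\in\mathbb{C}^{M\times M}$. For $\boldsymbol{\omega}\in\mathbb{R}^N$ and $m\in[1:M]$ define $z_m(\boldsymbol{\omega})=j\frac{\lambda_m}{\beta(M)}\sum_{n=1}^N\frac{|h_n|^2\omega_n}{1-j\frac{\sigma_v^2\omega_n}{\beta(M)}}$, $j=\sqrt{-1}$. *)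

theory Defs
  imports "HOL-Analysis.Analysis"
begin

definition zfun :: "real \<Rightarrow> real \<Rightarrow> nat \<Rightarrow> (nat \<Rightarrow> complex) \<Rightarrow> real \<Rightarrow> (nat \<Rightarrow> real) \<Rightarrow> complex" where
  "zfun sigma2 beta N h lam \<omega> =
     \<i> * complex_of_real (lam / beta) *
     (\<Sum>n=1..N. complex_of_real ((cmod (h n))\<^sup>2 * \<omega> n) /
                 (1 - \<i> * complex_of_real (sigma2 * \<omega> n / beta)))"

end

theory Submission imports Defs begin

text \<open>Every summand of \<open>z\<^sub>m\<close> is \<open>j c a/(1 - j b)\<close> with \<open>c \<ge> 0\<close> and \<open>a b \<ge> 0\<close>,
  so \<open>Re z\<^sub>m \<le> 0\<close>. Then \<open>1/(1 - z\<^sub>m)\<close> and \<open>exp z\<^sub>m\<close> both lie in the closed unit disc,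
  where the distance of two products is at most the sum of the distances of the factors.
  Each factor distance is at most 2, and since
  \<open>1/(1 - z) - exp z = exp z (exp (-z) - (1 - z)) / (1 - z)\<close> it is also at most
  \<open>|1 - z - exp (-z)|\<close>.\<close>

lemma Im_of_real_divide_one_minus_i:
  "Im (complex_of_real a / (1 - \<i> * complex_of_real b)) = a * b / (1 + b\<^sup>2)"
  by (simp add: Im_divide power2_eq_square)

lemma Re_zfun_nonpos:
  assumes "sigma2 \<ge> 0" "beta > 0" "lam \<ge> 0"
  shows "Re (zfun sigma2 beta N h lam \<omega>) \<le> 0"
proof -
  let ?S = "\<Sum>n=1..N. complex_of_real ((cmod (h n))\<^sup>2 * \<omega> n) /
                 (1 - \<i> * complex_of_real (sigma2 * \<omega> n / beta))"
  have "Im ?S \<ge> 0"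
    unfolding Im_sum Im_of_real_divide_one_minus_i
  proof (rule sum_nonneg)
    fix n
    have "(cmod (h n))\<^sup>2 * \<omega> n * (sigma2 * \<omega> n / beta) = (cmod (h n))\<^sup>2 * (\<omega> n)\<^sup>2 * sigma2 / beta"
      by (simp add: power2_eq_square)
    also have "\<dots> \<ge> 0" using assms by simp
    finally show "0 \<le> (cmod (h n))\<^sup>2 * \<omega> n * (sigma2 * \<omega> n / beta) / (1 + (sigma2 * \<omega> n / beta)\<^sup>2)"
      by (intro divide_nonneg_pos) (auto simp: add_pos_nonneg)
  qed
  moreover have "Re (zfun sigma2 beta N h lam \<omega>) = - (lam / beta * Im ?S)"
    by (simp add: zfun_def)
  ultimately show ?thesis using assms by simp
qed

lemma norm_inverse_one_minus_le_one:
  fixes z :: complex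
  assumes "Re z \<le> 0"
  shows "norm (1 / (1 - z)) \<le> 1"
proof -
  have "norm (1 - z) \<ge> 1"
    using complex_Re_le_cmod[of "1 - z"] assms by simp
  then show ?thesis by (simp add: norm_divide divide_le_eq_1)
qed

lemma norm_inverse_one_minus_diff_exp_le:
  fixes z :: complex
  assumes "Re z \<le> 0"
  shows "norm (1 / (1 - z) - exp z) \<le> min 2 (norm (1 - z - exp (- z)))"
proof -
  have inv: "norm (1 / (1 - z)) \<le> 1" using norm_inverse_one_minus_le_one[OF assms] .
  have exp: "norm (exp z) \<le> 1" using assms by simp
  have "norm (1 / (1 - z) - exp z) \<le> norm (1 / (1 - z)) + norm (exp z)"
    by (rule norm_triangle_ineq4)
  also have "\<dots> \<le> 2" using inv exp by linarith
  finally have le_2: "norm (1 / (1 - z) - exp z) \<le> 2" .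
  have "1 - z \<noteq> 0" using assms by auto
  then have "1 / (1 - z) - exp z = 1 / (1 - z) * exp z * (exp (- z) - (1 - z))"
    by (simp add: field_simps exp_minus)
  then have "norm (1 / (1 - z) - exp z) = norm (1 / (1 - z)) * norm (exp z) * norm (1 - z - exp (- z))"
    by (simp only: norm_mult norm_minus_commute)
  also have "\<dots> \<le> 1 * 1 * norm (1 - z - exp (- z))"
    by (intro mult_right_mono mult_mono inv exp) auto
  finally show ?thesis using le_2 by simp
qed

theorem lemma3:
  fixes sigma2 beta :: real and N M :: nat
    and h :: "nat \<Rightarrow> complex" and lam :: "nat \<Rightarrow> real" and \<omega> :: "nat \<Rightarrow> real"
  assumes "sigma2 > 0" and "beta > 0"
    and "\<And>m. m \<in> {1..M} \<Longrightarrow> lam m \<ge> 0"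
  shows "cmod ((\<Prod>m=1..M. 1 / (1 - zfun sigma2 beta N h (lam m) \<omega>))
               - (\<Prod>m=1..M. exp (zfun sigma2 beta N h (lam m) \<omega>)))
         \<le> (\<Sum>m=1..M. min 2 (cmod (1 - zfun sigma2 beta N h (lam m) \<omega>
                                      - exp (- zfun sigma2 beta N h (lam m) \<omega>))))"
proof -
  let ?z = "\<lambda>m. zfun sigma2 beta N h (lam m) \<omega>"
  have Re_z: "Re (?z m) \<le> 0" if "m \<in> {1..M}" for m
    using Re_zfun_nonpos assms that by simp
  have "cmod ((\<Prod>m=1..M. 1 / (1 - ?z m)) - (\<Prod>m=1..M. exp (?z m)))
     \<le> (\<Sum>m=1..M. norm (1 / (1 - ?z m) - exp (?z m)))"
    using Re_z by (intro norm_prod_diff norm_inverse_one_minus_le_one) auto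
  also have "\<dots> \<le> (\<Sum>m=1..M. min 2 (cmod (1 - ?z m - exp (- ?z m))))"
    by (intro sum_mono norm_inverse_one_minus_diff_exp_le Re_z)
  finally show ?thesis .
qed

end
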